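(* Let $n\in\omega$ and let $\mathcal{F}$ be a fully $\Delta$-capturing construction scheme of type $\langle m_k,n_{k+1},r_{k+1}\rangle_{k\in\omega}$ with $n_{k+1}\geq 2^{m_k}$ for all $k$. With $o_\alpha$ defined as in the context, the set $\mathbb{E}_o=\{o_\alpha:\alpha\in\omega_1\}\subseteq\mathbb{Z}^\omega$, ordered lexicographically, is $(2n+1)$-entangled.
   Context: Construction schemes: a type is a sequence $\langle m_k,n_{k+1},r_{k+1}\rangle_{k\in\omega}$ with $m_0=1$, $n_{k+1}\geq2$, $m_k>r_{k+1}$, $m_{k+1}=r_{k+1}+(m_k-r_{k+1})n_{k+1}$. A construction scheme of this type is a family $\mathcal{F}$ of nonempty finite subsets of $\omega_1$, cofinal under $\subseteq$, each member of size $m_k$ for some $k$, such that with $\mathcal{F}_k=\{F\in\mathcal{F}:|F|=m_k\}$: (i) for $E,F\in\mathcal{F}_k$, $E\cap F$ is an initial segment of $E$ and of $F$; (ii) each $F\in\mathcal{F}_{k+1}$ is $F_0\cup\dots\cup F_{n_{k+1}-1}$ with $F_i\in\mathcal{F}_k$ a $\Delta$-system with root $R(F)$, $|R(F)|=r_{k+1}$, $R(F)<F_0\setminus R(F)<\dots<F_{n_{k+1}-1}\setminus R(F)$. Let $\rho(\alpha,\beta)=\min\{k:\exists F\in\mathcal{F}_k\ \{\alpha,\beta\}\subseteq F\}$, $\|\alpha\|_k=|\{\xi<\alpha:\rho(\alpha,\xi)\leq k\}|$, $\Delta(\alpha,\beta)=$ least $k$ with $\|\alpha\|_k\ne\|\beta\|_k$.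 $\Xi_\alpha(0)=0$ and for $k\geq1$, for any $F\in\mathcal{F}_k$ containing $\alpha$, $\Xi_\alpha(k)=-1$ if $\alpha\in R(F)$, $=i$ if $\alpha\in F_i\setminus R(F)$. For finite $X\subseteq\omega_1$, $X(i)$ is its $i$-th element. $\langle D_j\rangle_{j<N}\subseteq[\omega_1]^m$ ($N\geq2$) is $\Delta$-captured at level $l$ if it is a $\Delta$-system with root $R$ of size $r$, $R<D_j\setminus R$, tails pairwise $<$-comparable, $\Xi_{D_j(a)}(l)=-1$ for $a<r$ and $=j$ for $a\geq r$, and $\Delta(D_i(a),D_j(a))=l$ for $i\neq j$, $r\leq a<m$. $\mathcal{F}$ is fully $\Delta$-capturing if for every uncountable family $\mathcal{S}$ of finite subsets of $\omega_1$ there are infinitely many $l$ such that some $n_l$ members of $\mathcal{S}$ can be enumerated as a family $\Delta$-captured at level $l$. The functions: for each $k$, let $\langle C^k_i\rangle_{0<i<n_{k+1}}$ enumerate (possibly with repetitions) the set $[m_k\setminus r_{k+1}]^{\leq n}$ of subsets of $m_k\setminus r_{k+1}$ of size at most $n$. For $\alpha<\omega_1$ define $o_\alpha:\omega\to\mathbb{Z}$ by: $o_\alpha(k)=0$ if $\Xi_\alpha(k)\leq0$; $o_\alpha(k)=\Xi_\alpha(k)$ if $\Xi_\alpha(k)>0$ and $\|\alpha\|_{k-1}\in C^{k-1}_{\Xi_\alpha(k)}$; $o_\alpha(k)=-\Xi_\alpha(k)$ if $\Xi_\alpha(k)>0$ and $\|\alpha\|_{k-1}\notin C^{k-1}_{\Xi_\alpha(k)}$.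 $\mathbb{Z}^\omega$ is ordered by $f<_{lex}g$ iff $f(k)<g(k)$ for the least $k$ with $f(k)\neq g(k)$. For a linear order, an uncountable subset $\mathbb{E}$ is $k$-entangled if for every $\tau:k\to2$ and every uncountable family $\mathcal{A}\subseteq[\mathbb{E}]^k$ of pairwise disjoint sets there are distinct $a,b\in\mathcal{A}$ with $a(i)<b(i)\iff\tau(i)=0$ for all $i<k$. *)

theory Defs
  imports Main "HOL-Library.Countable_Set"
begin

text \<open>omega_1 is modelled by a well-ordered type 'a that is uncountable and all of whose
proper initial segments are countable (this characterises the order type omega_1).\<close>

definition set_less :: "'a::linorder set \<Rightarrow> 'a set \<Rightarrow> bool" where
  "set_less A B \<longleftrightarrow> (\<forall>a\<in>A. \<forall>b\<in>B. a < b)"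

definition init_seg :: "'a::linorder set \<Rightarrow> 'a set \<Rightarrow> bool" where
  "init_seg S E \<longleftrightarrow> S \<subseteq> E \<and> (\<forall>x\<in>S. \<forall>y\<in>E. y < x \<longrightarrow> y \<in> S)"

definition is_type :: "(nat \<Rightarrow> nat) \<Rightarrow> (nat \<Rightarrow> nat) \<Rightarrow> (nat \<Rightarrow> nat) \<Rightarrow> bool" where
  "is_type m nn rr \<longleftrightarrow> m 0 = 1 \<and>
     (\<forall>k. 2 \<le> nn (Suc k) \<and> rr (Suc k) < m k \<and>
          m (Suc k) = rr (Suc k) + (m k - rr (Suc k)) * nn (Suc k))"

definition level :: "(nat \<Rightarrow> nat) \<Rightarrow> 'a set set \<Rightarrow> nat \<Rightarrow> 'a set set" where
  "level m \<F> k = {F \<in> \<F>. card F = m k}"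

definition decomp :: "(nat \<Rightarrow> nat) \<Rightarrow> (nat \<Rightarrow> nat) \<Rightarrow> (nat \<Rightarrow> nat) \<Rightarrow> 'a::linorder set set
     \<Rightarrow> nat \<Rightarrow> 'a set \<Rightarrow> (nat \<Rightarrow> 'a set) \<Rightarrow> 'a set \<Rightarrow> bool" where
  "decomp m nn rr \<F> k F Fs R \<longleftrightarrow>
     F \<in> level m \<F> k \<and>
     (\<forall>i<nn k. Fs i \<in> level m \<F> (k - 1)) \<and>
     F = (\<Union>i<nn k. Fs i) \<and>
     (\<forall>i<nn k. \<forall>j<nn k. i \<noteq> j \<longrightarrow> Fs i \<inter> Fs j = R) \<and>
     card R = rr k \<and>
     set_less R (Fs 0 - R) \<and>
     (\<forall>i. Suc i < nn k \<longrightarrow> set_less (Fs i - R) (Fs (Suc i) - R))"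

definition construction_scheme :: "(nat \<Rightarrow> nat) \<Rightarrow> (nat \<Rightarrow> nat) \<Rightarrow> (nat \<Rightarrow> nat)
     \<Rightarrow> 'a::linorder set set \<Rightarrow> bool" where
  "construction_scheme m nn rr \<F> \<longleftrightarrow>
     is_type m nn rr \<and>
     (\<forall>F\<in>\<F>. F \<noteq> {} \<and> finite F \<and> (\<exists>k. card F = m k)) \<and>
     (\<forall>A. finite A \<longrightarrow> (\<exists>F\<in>\<F>. A \<subseteq> F)) \<and>
     (\<forall>k. \<forall>E\<in>level m \<F> k. \<forall>F\<in>level m \<F> k. init_seg (E \<inter> F) E \<and> init_seg (E \<inter> F) F) \<and>
     (\<forall>k. \<forall>F\<in>level m \<F> (Suc k). \<exists>Fs R. decomp m nn rr \<F> (Suc k) F Fs R)"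

definition rho :: "(nat \<Rightarrow> nat) \<Rightarrow> 'a set set \<Rightarrow> 'a \<Rightarrow> 'a \<Rightarrow> nat" where
  "rho m \<F> \<alpha> \<beta> = (LEAST k. \<exists>F\<in>level m \<F> k. \<alpha> \<in> F \<and> \<beta> \<in> F)"

definition knorm :: "(nat \<Rightarrow> nat) \<Rightarrow> 'a::linorder set set \<Rightarrow> 'a \<Rightarrow> nat \<Rightarrow> nat" where
  "knorm m \<F> \<alpha> k = card {\<xi>. \<xi> < \<alpha> \<and> rho m \<F> \<alpha> \<xi> \<le> k}"

definition Delta :: "(nat \<Rightarrow> nat) \<Rightarrow> 'a::linorder set set \<Rightarrow> 'a \<Rightarrow> 'a \<Rightarrow> nat" where
  "Delta m \<F> \<alpha> \<beta> = (LEAST k. knorm m \<F> \<alpha> k \<noteq> knorm m \<F> \<beta> k)"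

definition Xi :: "(nat \<Rightarrow> nat) \<Rightarrow> (nat \<Rightarrow> nat) \<Rightarrow> (nat \<Rightarrow> nat) \<Rightarrow> 'a::linorder set set
     \<Rightarrow> 'a \<Rightarrow> nat \<Rightarrow> int" where
  "Xi m nn rr \<F> \<alpha> k = (if k = 0 then 0 else
     (THE v. \<exists>F Fs R. decomp m nn rr \<F> k F Fs R \<and> \<alpha> \<in> F \<and>
        ((\<alpha> \<in> R \<and> v = -1) \<or> (\<exists>i<nn k. \<alpha> \<in> Fs i - R \<and> v = int i))))"

definition nth_el :: "'a::linorder set \<Rightarrow> nat \<Rightarrow> 'a" where
  "nth_el X i = sorted_list_of_set X ! i"

definition captured :: "(nat \<Rightarrow> nat) \<Rightarrow> (nat \<Rightarrow> nat) \<Rightarrow> (nat \<Rightarrow> nat) \<Rightarrow> 'a::linorder set set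
     \<Rightarrow> nat \<Rightarrow> (nat \<Rightarrow> 'a set) \<Rightarrow> nat \<Rightarrow> bool" where
  "captured m nn rr \<F> l D N \<longleftrightarrow> 2 \<le> N \<and>
     (\<exists>mm. \<forall>j<N. finite (D j) \<and> card (D j) = mm) \<and>
     (\<exists>R. (\<forall>i<N. \<forall>j<N. i \<noteq> j \<longrightarrow> D i \<inter> D j = R) \<and>
          (\<forall>j<N. set_less R (D j - R)) \<and>
          (\<forall>i<N. \<forall>j<N. i \<noteq> j \<longrightarrow> set_less (D i - R) (D j - R) \<or> set_less (D j - R) (D i - R)) \<and>
          (\<forall>j<N. \<forall>a<card R. Xi m nn rr \<F> (nth_el (D j) a) l = -1) \<and>
          (\<forall>j<N. \<forall>a. card R \<le> a \<and> a < card (D j) \<longrightarrow> Xi m nn rr \<F> (nth_el (D j) a) l = int j) \<and>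
          (\<forall>i<N. \<forall>j<N. i \<noteq> j \<longrightarrow> (\<forall>a. card R \<le> a \<and> a < card (D i) \<longrightarrow>
               Delta m \<F> (nth_el (D i) a) (nth_el (D j) a) = l)))"

definition fully_capturing :: "(nat \<Rightarrow> nat) \<Rightarrow> (nat \<Rightarrow> nat) \<Rightarrow> (nat \<Rightarrow> nat) \<Rightarrow> 'a::linorder set set \<Rightarrow> bool" where
  "fully_capturing m nn rr \<F> \<longleftrightarrow>
     (\<forall>S. (\<forall>X\<in>S. finite X) \<and> \<not> countable S \<longrightarrow>
        infinite {l. 0 < l \<and> (\<exists>D. inj_on D {..<nn l} \<and> (\<forall>j<nn l. D j \<in> S) \<and>
                                   captured m nn rr \<F> l D (nn l))})"

definition o_fun :: "(nat \<Rightarrow> nat) \<Rightarrow> (nat \<Rightarrow> nat) \<Rightarrow> (nat \<Rightarrow> nat) \<Rightarrow> 'a::linorder set set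
     \<Rightarrow> (nat \<Rightarrow> nat \<Rightarrow> nat set) \<Rightarrow> 'a \<Rightarrow> nat \<Rightarrow> int" where
  "o_fun m nn rr \<F> C \<alpha> k =
     (let x = Xi m nn rr \<F> \<alpha> k in
      if x \<le> 0 then 0
      else if knorm m \<F> \<alpha> (k - 1) \<in> C (k - 1) (nat x) then x else - x)"

definition lex_less :: "(nat \<Rightarrow> int) \<Rightarrow> (nat \<Rightarrow> int) \<Rightarrow> bool" where
  "lex_less f g \<longleftrightarrow> (\<exists>k. f k < g k \<and> (\<forall>j<k. f j = g j))"

definition ord_nth :: "('b \<Rightarrow> 'b \<Rightarrow> bool) \<Rightarrow> 'b set \<Rightarrow> nat \<Rightarrow> 'b" where
  "ord_nth lt a i = (THE x. x \<in> a \<and> card {y \<in> a. lt y x} = i)"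

definition entangled :: "('b \<Rightarrow> 'b \<Rightarrow> bool) \<Rightarrow> nat \<Rightarrow> 'b set \<Rightarrow> bool" where
  "entangled lt k E \<longleftrightarrow> \<not> countable E \<and>
     (\<forall>(\<tau>::nat \<Rightarrow> nat) \<A>. (\<forall>i<k. \<tau> i < 2) \<and>
        \<A> \<subseteq> {a. a \<subseteq> E \<and> finite a \<and> card a = k} \<and> \<not> countable \<A> \<and>
        (\<forall>a\<in>\<A>. \<forall>b\<in>\<A>. a \<noteq> b \<longrightarrow> a \<inter> b = {}) \<longrightarrow>
        (\<exists>a\<in>\<A>. \<exists>b\<in>\<A>. a \<noteq> b \<and>
           (\<forall>i<k. lt (ord_nth lt a i) (ord_nth lt b i) \<longleftrightarrow> \<tau> i = 0)))"

end

theory Submission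
  imports Defs
begin

(* Write ||alpha||_k for the position of alpha inside any level-k set of the scheme containing it.
   Then Xi_alpha(k+1) is a function of ||alpha||_(k+1) alone (the root fills the first r_(k+1)
   positions, followed by blocks of equal size), so o_alpha and o_beta agree below
   Delta(alpha, beta) and their lexicographic comparison is decided at level Delta(alpha, beta).

   Given an uncountable family of pairwise disjoint (2n+1)-subsets of E_o, pull it back to
   omega_1 and fix the permutation by which o orders each preimage; the prescribed pattern tau
   becomes a set I of coordinates. After also fixing a level K containing each preimage, full
   capturing yields members D_0, ..., D_(n_l - 1) captured at a level l = k+1 > K, with empty root.
   Every element of D_0 lies in block 0 (so o vanishes at level l) and in one level-k set, so the
   positions p(s) = ||D_0(s)||_k are distinct points of [r_l, m_k); meanwhile
   o_(D_j(s))(l) = +-j with sign + exactly when p(s) is in C^k_j. Since I or its complement has at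
   most n elements, its image under p is some C^k_j, and D_0, D_j in one order or the other
   realize tau. *)

lemma uncountable_fiber:
  assumes "countable (f ` A)" and "uncountable A"
  obtains c where "uncountable {a\<in>A. f a = c}"
proof (rule ccontr)
  assume "\<not> thesis"
  then have "countable {a\<in>A. f a = c}" for c using that by blast
  then have "countable (\<Union>c\<in>f ` A. {a\<in>A. f a = c})" using assms(1) by blast
  moreover have "A = (\<Union>c\<in>f ` A. {a\<in>A. f a = c})" by auto
  ultimately show False using assms(2) by simp
qed

lemma set_less_trans: "set_less A B \<Longrightarrow> set_less B C \<Longrightarrow> B \<noteq> {} \<Longrightarrow> set_less A C"
  unfolding set_less_def by (meson ex_in_conv less_trans)

lemma nth_el_in: "finite X \<Longrightarrow> s < card X \<Longrightarrow> nth_el X s \<in> X"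
  unfolding nth_el_def by (metis length_sorted_list_of_set nth_mem set_sorted_list_of_set)

lemma nth_el_strict_mono: "finite X \<Longrightarrow> s < s' \<Longrightarrow> s' < card X \<Longrightarrow> nth_el X s < nth_el X s'"
  unfolding nth_el_def
  by (metis length_sorted_list_of_set sorted_list_of_set.strict_sorted_key_list_of_set sorted_wrt_nth_less)

lemma inj_on_nth_el: "finite X \<Longrightarrow> inj_on (nth_el X) {..<card X}"
  by (intro inj_onI) (metis lessThan_iff less_irrefl linorder_neqE_nat nth_el_strict_mono)

lemma nth_el_surj: "finite X \<Longrightarrow> x \<in> X \<Longrightarrow> \<exists>s<card X. nth_el X s = x"
  unfolding nth_el_def by (metis in_set_conv_nth length_sorted_list_of_set set_sorted_list_of_set)

lemma nth_el_singleton [simp]: "nth_el {x} 0 = x"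
  unfolding nth_el_def by simp

lemma section_of_finite_subset_range:
  assumes "a \<subseteq> range f" and "finite a"
  shows "f ` inv f ` a = a" and "inj_on f (inv f ` a)" and "finite (inv f ` a)"
    and "card (inv f ` a) = card a"
proof -
  show img: "f ` inv f ` a = a" using image_inv_into_cancel[OF refl assms(1)] .
  show fin: "finite (inv f ` a)" using assms(2) by simp
  show card: "card (inv f ` a) = card a" using card_image[OF inj_on_inv_into[OF assms(1)]] .
  show "inj_on f (inv f ` a)" by (rule eq_card_imp_inj_on[OF fin]) (simp add: img card)
qed

lemma sections_of_disjoint_family:
  assumes AA: "AA \<subseteq> {a. a \<subseteq> range f \<and> finite a \<and> card a = N}" and "uncountable AA"
    and disj: "\<forall>a\<in>AA. \<forall>b\<in>AA. a \<noteq> b \<longrightarrow> a \<inter> b = {}"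
  shows "uncountable ((\<lambda>a. inv f ` a) ` AA)"
    and "(\<lambda>a. inv f ` a) ` AA \<subseteq> {X. finite X \<and> card X = N}"
    and "pairwise disjnt ((\<lambda>a. inv f ` a) ` AA)"
proof -
  have sec: "f ` inv f ` a = a" "finite (inv f ` a)" "card (inv f ` a) = N" if "a \<in> AA" for a
  proof -
    have a: "a \<subseteq> range f" "finite a" "card a = N" using AA that by auto
    note s = section_of_finite_subset_range[OF a(1,2)]
    show "f ` inv f ` a = a" by (fact s(1))
    show "finite (inv f ` a)" by (fact s(3))
    show "card (inv f ` a) = N" using s(4) a(3) by simp
  qed
  have "inj_on (\<lambda>a. inv f ` a) AA"
  proof (rule inj_onI)
    fix a b assume "a \<in> AA" "b \<in> AA" "inv f ` a = inv f ` b"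
    then have "f ` inv f ` a = f ` inv f ` b" by simp
    then show "a = b" using sec(1)[OF \<open>a \<in> AA\<close>] sec(1)[OF \<open>b \<in> AA\<close>] by simp
  qed
  then show "uncountable ((\<lambda>a. inv f ` a) ` AA)" using \<open>uncountable AA\<close> countable_image_inj_on by blast
  show "(\<lambda>a. inv f ` a) ` AA \<subseteq> {X. finite X \<and> card X = N}" using sec by auto
  show "pairwise disjnt ((\<lambda>a. inv f ` a) ` AA)"
  proof (rule pairwiseI)
    fix X Y assume "X \<in> (\<lambda>a. inv f ` a) ` AA" "Y \<in> (\<lambda>a. inv f ` a) ` AA" "X \<noteq> Y"
    then obtain a b where ab: "a \<in> AA" "b \<in> AA" "a \<noteq> b" "X = inv f ` a" "Y = inv f ` b" by blast
    then have "a \<inter> b = {}" using disj by blast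
    then show "disjnt X Y" unfolding disjnt_def ab(4,5) using sec(1)[OF ab(1)] sec(1)[OF ab(2)] by blast
  qed
qed

definition rank :: "('b \<Rightarrow> 'b \<Rightarrow> bool) \<Rightarrow> 'b set \<Rightarrow> 'b \<Rightarrow> nat" where
  "rank lt a x = card {y\<in>a. lt y x}"

locale strict_total_order =
  fixes lt :: "'b \<Rightarrow> 'b \<Rightarrow> bool"
  assumes irrefl: "\<not> lt x x"
    and trans: "lt x y \<Longrightarrow> lt y z \<Longrightarrow> lt x z"
    and total: "x \<noteq> y \<Longrightarrow> lt x y \<or> lt y x"
begin

lemma rank_strict_mono:
  assumes "finite a" and "x \<in> a" and "lt x y"
  shows "rank lt a x < rank lt a y"
proof -
  have "{z\<in>a. lt z x} \<subset> {z\<in>a. lt z y}" using assms(2,3) irrefl trans by blast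
  then show ?thesis unfolding rank_def using assms(1) by (intro psubset_card_mono) auto
qed

lemma inj_on_rank: "finite a \<Longrightarrow> inj_on (rank lt a) a"
  by (intro inj_onI) (metis rank_strict_mono total less_irrefl)

lemma rank_image: "finite a \<Longrightarrow> rank lt a ` a = {..<card a}"
proof -
  assume a: "finite a"
  have "rank lt a ` a \<subseteq> {..<card a}"
    unfolding rank_def using a irrefl by (auto intro: psubset_card_mono)
  moreover have "card (rank lt a ` a) = card {..<card a}"
    using card_image[OF inj_on_rank[OF a]] by simp
  ultimately show ?thesis by (intro card_subset_eq) auto
qed

lemma ord_nth_rank: "finite a \<Longrightarrow> x \<in> a \<Longrightarrow> ord_nth lt a (rank lt a x) = x"
  unfolding ord_nth_def
proof (rule the_equality)
  show "x \<in> a \<and> card {y \<in> a. lt y x} = rank lt a x" if "x \<in> a" using that by (simp add: rank_def)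
  show "y = x" if "finite a" "x \<in> a" "y \<in> a \<and> card {z \<in> a. lt z y} = rank lt a x" for y
    using that inj_on_rank[OF that(1)] by (metis inj_onD rank_def)
qed

lemma
  assumes "a \<subseteq> range f" and "finite a"
  shows ord_nth_rank_section:
      "s < card a \<Longrightarrow> ord_nth lt a (rank lt a (f (nth_el (inv f ` a) s))) = f (nth_el (inv f ` a) s)"
    and rank_section_onto: "t < card a \<Longrightarrow> \<exists>s<card a. rank lt a (f (nth_el (inv f ` a) s)) = t"
proof -
  note sec = section_of_finite_subset_range[OF assms]
  show "ord_nth lt a (rank lt a (f (nth_el (inv f ` a) s))) = f (nth_el (inv f ` a) s)" if "s < card a"
  proof -
    have "nth_el (inv f ` a) s \<in> inv f ` a" using nth_el_in[OF sec(3)] sec(4) that by simp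
    then have "f (nth_el (inv f ` a) s) \<in> f ` inv f ` a" by (rule imageI)
    then show ?thesis unfolding sec(1) by (rule ord_nth_rank[OF assms(2)])
  qed
  show "\<exists>s<card a. rank lt a (f (nth_el (inv f ` a) s)) = t" if "t < card a"
  proof -
    have "t \<in> rank lt a ` a" using rank_image[OF assms(2)] that by simp
    then obtain y where y: "y \<in> f ` inv f ` a" "rank lt a y = t" unfolding sec(1) by (rule imageE) simp
    obtain x where x: "y = f x" "x \<in> inv f ` a" using y(1) by (rule imageE)
    obtain s where "s < card (inv f ` a)" "nth_el (inv f ` a) s = x" using nth_el_surj[OF sec(3) x(2)] by blast
    then show ?thesis using x(1) y(2) sec(4) by auto
  qed
qed

lemma entangled_rangeI:
  fixes f :: "'a::linorder \<Rightarrow> 'b"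
  assumes unc: "uncountable (range f)"
    and realize: "\<And>S I. uncountable S \<Longrightarrow> S \<subseteq> {X. finite X \<and> card X = N} \<Longrightarrow> pairwise disjnt S \<Longrightarrow>
        I \<subseteq> {..<N} \<Longrightarrow> \<exists>X\<in>S. \<exists>Y\<in>S. X \<noteq> Y \<and> (\<forall>s<N. lt (f (nth_el X s)) (f (nth_el Y s)) \<longleftrightarrow> s \<in> I)"
  shows "entangled lt N (range f)"
  unfolding entangled_def
proof (intro conjI allI impI unc)
  fix \<tau> :: "nat \<Rightarrow> nat" and AA
  assume "(\<forall>i<N. \<tau> i < 2) \<and> AA \<subseteq> {a. a \<subseteq> range f \<and> finite a \<and> card a = N} \<and> uncountable AA \<and>
      (\<forall>a\<in>AA. \<forall>b\<in>AA. a \<noteq> b \<longrightarrow> a \<inter> b = {})"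
  then have AA: "AA \<subseteq> {a. a \<subseteq> range f \<and> finite a \<and> card a = N}" and "uncountable AA"
    and disj: "\<forall>a\<in>AA. \<forall>b\<in>AA. a \<noteq> b \<longrightarrow> a \<inter> b = {}"
    by auto
  define pattern where "pattern a = map (\<lambda>s. rank lt a (f (nth_el (inv f ` a) s))) [0..<N]" for a
  obtain \<pi> where "uncountable {a\<in>AA. pattern a = \<pi>}"
    using uncountable_fiber[OF countable_subset[OF subset_UNIV countableI_type] \<open>uncountable AA\<close>] .
  moreover define AA' where "AA' = {a\<in>AA. pattern a = \<pi>}"
  ultimately have "uncountable AA'" by simp
  have AA': "a \<in> AA" "a \<subseteq> range f" "finite a" "card a = N"
    "\<And>s. s < N \<Longrightarrow> \<pi> ! s = rank lt a (f (nth_el (inv f ` a) s))" if "a \<in> AA'" for a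
    using that AA by (auto simp: AA'_def pattern_def)
  have \<pi>_onto: "\<exists>s<N. \<pi> ! s = t" if "t < N" for t
  proof -
    obtain a where a: "a \<in> AA'" using \<open>uncountable AA'\<close> by (metis countable_empty ex_in_conv)
    obtain s where "s < N" "rank lt a (f (nth_el (inv f ` a) s)) = t"
      using rank_section_onto[OF AA'(2,3)[OF a], of t] AA'(4)[OF a] \<open>t < N\<close> by auto
    then show ?thesis using AA'(5)[OF a] by auto
  qed
  have ord_nth_\<pi>: "ord_nth lt a (\<pi> ! s) = f (nth_el (inv f ` a) s)" if "a \<in> AA'" "s < N" for a s
    using ord_nth_rank_section[OF AA'(2,3)[OF that(1)], of s] AA'(4,5)[OF that(1)] that(2) by simp
  have "AA' \<subseteq> {a. a \<subseteq> range f \<and> finite a \<and> card a = N}" "\<forall>a\<in>AA'. \<forall>b\<in>AA'. a \<noteq> b \<longrightarrow> a \<inter> b = {}"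
    using AA disj by (auto simp: AA'_def)
  note sections = sections_of_disjoint_family[OF this(1) \<open>uncountable AA'\<close> this(2)]
  define I where "I = {s. s < N \<and> \<tau> (\<pi> ! s) = 0}"
  have "I \<subseteq> {..<N}" by (auto simp: I_def)
  from realize[OF sections this] obtain a b where ab: "a \<in> AA'" "b \<in> AA'" "a \<noteq> b"
    and cmp: "\<forall>s<N. lt (f (nth_el (inv f ` a) s)) (f (nth_el (inv f ` b) s)) \<longleftrightarrow> s \<in> I"
    by blast
  have "lt (ord_nth lt a t) (ord_nth lt b t) \<longleftrightarrow> \<tau> t = 0" if "t < N" for t
  proof -
    obtain s where s: "s < N" "\<pi> ! s = t" using \<pi>_onto[OF \<open>t < N\<close>] by blast
    then show ?thesis using cmp ord_nth_\<pi>[OF ab(1) s(1)] ord_nth_\<pi>[OF ab(2) s(1)] by (simp add: I_def)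
  qed
  then show "\<exists>a\<in>AA. \<exists>b\<in>AA. a \<noteq> b \<and> (\<forall>i<N. lt (ord_nth lt a i) (ord_nth lt b i) \<longleftrightarrow> \<tau> i = 0)"
    using ab AA'(1) by blast
qed

end

lemma lex_less_iff_first_difference:
  assumes "\<forall>j<l. f j = g j" and "f l \<noteq> g l"
  shows "lex_less f g \<longleftrightarrow> f l < g l"
proof
  assume "lex_less f g"
  then obtain k where k: "f k < g k" "\<forall>j<k. f j = g j" unfolding lex_less_def by blast
  have "k = l" using k assms by (metis less_irrefl linorder_neqE_nat)
  then show "f l < g l" using k by simp
qed (use assms in \<open>auto simp: lex_less_def\<close>)

interpretation lex: strict_total_order lex_less
proof
  show "\<not> lex_less f f" for f by (simp add: lex_less_def)
  show "lex_less f h" if "lex_less f g" "lex_less g h" for f g h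
  proof -
    from that obtain k1 k2 where "f k1 < g k1" "\<forall>j<k1. f j = g j" "g k2 < h k2" "\<forall>j<k2. g j = h j"
      unfolding lex_less_def by blast
    then have "f (min k1 k2) < h (min k1 k2) \<and> (\<forall>j<min k1 k2. f j = h j)"
      by (cases k1 k2 rule: linorder_cases) auto
    then show ?thesis unfolding lex_less_def by blast
  qed
  show "lex_less f g \<or> lex_less g f" if "f \<noteq> g" for f g
  proof -
    define k where "k = (LEAST k. f k \<noteq> g k)"
    have "f k \<noteq> g k" unfolding k_def by (rule LeastI_ex) (use that in auto)
    moreover have "\<forall>j<k. f j = g j" unfolding k_def using not_less_Least by blast
    ultimately show ?thesis
      using lex_less_iff_first_difference[of k f g] lex_less_iff_first_difference[of k g f]
      by (metis linorder_neqE)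
  qed
qed

section \<open>Levels of a construction scheme\<close>

locale scheme =
  fixes m nn rr :: "nat \<Rightarrow> nat" and \<F> :: "'a::linorder set set"
  assumes construction_scheme: "construction_scheme m nn rr \<F>"
    and uncountable_UNIV: "uncountable (UNIV :: 'a set)"
begin

lemma is_type: "is_type m nn rr"
  and members_finite: "F \<in> \<F> \<Longrightarrow> finite F \<and> (\<exists>k. card F = m k)"
  and cofinal: "finite A \<Longrightarrow> \<exists>F\<in>\<F>. A \<subseteq> F"
  and levels_coherent: "E \<in> level m \<F> k \<Longrightarrow> F \<in> level m \<F> k \<Longrightarrow> init_seg (E \<inter> F) E"
  and decomp_exists: "F \<in> level m \<F> (Suc k) \<Longrightarrow> \<exists>Fs R. decomp m nn rr \<F> (Suc k) F Fs R"
  using construction_scheme unfolding construction_scheme_def by blast+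

lemma m_0: "m 0 = 1"
  and nn_ge_2: "2 \<le> nn (Suc k)"
  and rr_less_m: "rr (Suc k) < m k"
  and m_Suc: "m (Suc k) = rr (Suc k) + (m k - rr (Suc k)) * nn (Suc k)"
  using is_type unfolding is_type_def by auto

lemma m_strict_mono: "strict_mono m"
proof (rule strict_mono_Suc_iff[THEN iffD2], intro allI)
  fix k
  have "(m k - rr (Suc k)) * 2 \<le> (m k - rr (Suc k)) * nn (Suc k)" using nn_ge_2 by simp
  then show "m k < m (Suc k)" using rr_less_m[of k] m_Suc[of k] by linarith
qed

lemma in_levelD: "F \<in> level m \<F> k \<Longrightarrow> F \<in> \<F> \<and> finite F \<and> card F = m k"
  unfolding level_def using members_finite by auto

lemma level_nonempty: "F \<in> level m \<F> k \<Longrightarrow> F \<noteq> {}"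
proof
  assume "F \<in> level m \<F> k" "F = {}"
  then have "m k = 0" using in_levelD by force
  moreover have "m 0 \<le> m k" using strict_mono_less_eq[OF m_strict_mono] by simp
  ultimately show False using m_0 by simp
qed

lemma level_coherent:
  assumes "E \<in> level m \<F> k" "F \<in> level m \<F> k" "x \<in> E" "x \<in> F" "y \<in> E" "y \<le> x"
  shows "y \<in> F"
  using levels_coherent[OF assms(1,2)] assms(3-6) unfolding init_seg_def by (cases "y = x") auto

lemma exists_sublevel_set:
  "H \<in> level m \<F> j \<Longrightarrow> k \<le> j \<Longrightarrow> x \<in> H \<Longrightarrow> \<exists>H'\<in>level m \<F> k. x \<in> H' \<and> H' \<subseteq> H"
proof (induction j arbitrary: H)
  case (Suc j)
  show ?case
  proof (cases "k = Suc j")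
    case False
    obtain Fs R where d: "decomp m nn rr \<F> (Suc j) H Fs R" using decomp_exists Suc.prems(1) by blast
    then obtain i where i: "i < nn (Suc j)" "x \<in> Fs i" using Suc.prems(3) unfolding decomp_def by blast
    then have "Fs i \<in> level m \<F> j" "Fs i \<subseteq> H" using d unfolding decomp_def by auto
    moreover have "k \<le> j" using False Suc.prems(2) by simp
    ultimately show ?thesis using Suc.IH[of "Fs i"] i(2) by blast
  qed (use Suc.prems in auto)
qed auto

lemma exists_superset_at_level: "finite A \<Longrightarrow> \<exists>j\<ge>k. \<exists>H\<in>level m \<F> j. A \<subseteq> H"
proof -
  assume "finite A"
  obtain B :: "'a set" where B: "finite B" "card B = m k"
    using infinite_arbitrarily_large uncountable_infinite[OF uncountable_UNIV] by blast
  obtain H where H: "H \<in> \<F>" "A \<union> B \<subseteq> H" using cofinal \<open>finite A\<close> B(1) by blast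
  then obtain j where j: "H \<in> level m \<F> j" using members_finite unfolding level_def by blast
  have "m k \<le> m j" using card_mono[of H B] in_levelD[OF j] H(2) B(2) by auto
  then have "k \<le> j" using strict_mono_less_eq[OF m_strict_mono] by blast
  then show ?thesis using H(2) j by auto
qed

lemma exists_level_set: "\<exists>F\<in>level m \<F> k. x \<in> F"
proof -
  obtain j H where H: "k \<le> j" "H \<in> level m \<F> j" "{x} \<subseteq> H"
    using exists_superset_at_level[of "{x}" k] by blast
  then have "x \<in> H" by simp
  with exists_sublevel_set[OF H(2,1)] show ?thesis by blast
qed

text \<open>A level-\<open>k\<close> set through \<open>Max G\<close> contains a level-\<open>k'\<close> set through \<open>Max G\<close>,
  and the latter contains \<open>G\<close> by coherence.\<close>

lemma level_set_extends:
  assumes G: "G \<in> level m \<F> k'" and "k' \<le> k"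
  obtains G' where "G' \<in> level m \<F> k" and "G \<subseteq> G'"
proof -
  have "finite G" "G \<noteq> {}" using in_levelD[OF G] level_nonempty[OF G] by auto
  define x where "x = Max G"
  have x: "x \<in> G" "\<forall>y\<in>G. y \<le> x" using \<open>finite G\<close> \<open>G \<noteq> {}\<close> unfolding x_def by auto
  obtain j H where H: "j \<ge> k" "H \<in> level m \<F> j" "G \<subseteq> H"
    using exists_superset_at_level[OF \<open>finite G\<close>, of k] by blast
  have "x \<in> H" using x(1) H(3) by blast
  then obtain G' where G': "G' \<in> level m \<F> k" "x \<in> G'" "G' \<subseteq> H"
    using exists_sublevel_set[OF H(2) H(1)] by blast
  obtain G'' where G'': "G'' \<in> level m \<F> k'" "x \<in> G''" "G'' \<subseteq> G'"
    using exists_sublevel_set[OF G'(1) \<open>k' \<le> k\<close> G'(2)] by blast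
  have "G \<subseteq> G''" using level_coherent[OF G G''(1) x(1) G''(2)] x(2) by blast
  then show ?thesis using that[OF G'(1)] G''(3) by blast
qed

lemma rho_le: "F \<in> level m \<F> k \<Longrightarrow> a \<in> F \<Longrightarrow> b \<in> F \<Longrightarrow> rho m \<F> a b \<le> k"
  unfolding rho_def by (rule Least_le) blast

lemma rho_witness: "\<exists>F\<in>level m \<F> (rho m \<F> a b). a \<in> F \<and> b \<in> F"
proof -
  obtain j H where "H \<in> level m \<F> j" "{a, b} \<subseteq> H"
    using exists_superset_at_level[of "{a, b}" 0] by blast
  then have "\<exists>j. \<exists>F\<in>level m \<F> j. a \<in> F \<and> b \<in> F" by blast
  then show ?thesis unfolding rho_def by (rule LeastI_ex)
qed

lemma knorm_eq_card_below:
  assumes F: "F \<in> level m \<F> k" and "a \<in> F"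
  shows "knorm m \<F> a k = card {\<xi>\<in>F. \<xi> < a}"
proof -
  have "\<xi> \<in> F" if \<xi>: "\<xi> < a" "rho m \<F> a \<xi> \<le> k" for \<xi>
  proof -
    obtain G where G: "G \<in> level m \<F> (rho m \<F> a \<xi>)" "a \<in> G" "\<xi> \<in> G" using rho_witness by blast
    obtain G' where G': "G' \<in> level m \<F> k" "G \<subseteq> G'" using level_set_extends[OF G(1) \<xi>(2)] .
    show ?thesis
      using level_coherent[OF G'(1) F _ \<open>a \<in> F\<close>] G G'(2) less_imp_le[OF \<xi>(1)] by blast
  qed
  then have "{\<xi>. \<xi> < a \<and> rho m \<F> a \<xi> \<le> k} = {\<xi>\<in>F. \<xi> < a}"
    using rho_le[OF F \<open>a \<in> F\<close>] by auto
  then show ?thesis unfolding knorm_def by simp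
qed

lemma knorm_strict_mono_on_level:
  assumes F: "F \<in> level m \<F> k" and "a \<in> F" "b \<in> F" "a < b"
  shows "knorm m \<F> a k < knorm m \<F> b k"
proof -
  have "{\<xi>\<in>F. \<xi> < a} \<subset> {\<xi>\<in>F. \<xi> < b}" using assms(2-4) by auto
  then show ?thesis
    using in_levelD[OF F] knorm_eq_card_below[OF F] assms(2,3) by (simp add: psubset_card_mono)
qed

lemma inj_on_knorm_level: "F \<in> level m \<F> k \<Longrightarrow> inj_on (\<lambda>x. knorm m \<F> x k) F"
  by (intro inj_onI) (metis knorm_strict_mono_on_level less_irrefl linorder_neqE)

section \<open>Positions inside a decomposition\<close>

context
  fixes k :: nat and F :: "'a set" and Fs :: "nat \<Rightarrow> 'a set" and R :: "'a set"
  assumes decomp: "decomp m nn rr \<F> (Suc k) F Fs R"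
begin

lemma decomp_level: "F \<in> level m \<F> (Suc k)"
  and part_level: "i < nn (Suc k) \<Longrightarrow> Fs i \<in> level m \<F> k"
  and Union_parts: "F = (\<Union>i<nn (Suc k). Fs i)"
  and parts_Int: "i < nn (Suc k) \<Longrightarrow> j < nn (Suc k) \<Longrightarrow> i \<noteq> j \<Longrightarrow> Fs i \<inter> Fs j = R"
  and card_root: "card R = rr (Suc k)"
  and root_below_block_0: "set_less R (Fs 0 - R)"
  and block_below_next: "Suc i < nn (Suc k) \<Longrightarrow> set_less (Fs i - R) (Fs (Suc i) - R)"
  using decomp unfolding decomp_def by auto

lemma root_subset_part: "i < nn (Suc k) \<Longrightarrow> R \<subseteq> Fs i"
  using parts_Int[of 0 1] parts_Int[of 0 i] nn_ge_2[of k] by (cases "i = 0") auto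

lemma finite_root: "finite R"
  using root_subset_part[of 0] in_levelD[OF part_level[of 0]] nn_ge_2[of k] finite_subset by auto

lemma block_card: "i < nn (Suc k) \<Longrightarrow> card (Fs i - R) = m k - rr (Suc k)"
  using root_subset_part[of i] in_levelD[OF part_level[of i]] card_root
  by (simp add: card_Diff_subset finite_root)

lemma block_finite: "i < nn (Suc k) \<Longrightarrow> finite (Fs i - R)"
  using in_levelD[OF part_level[of i]] by simp

lemma block_nonempty: "i < nn (Suc k) \<Longrightarrow> Fs i - R \<noteq> {}"
  using block_card[of i] rr_less_m[of k] by fastforce

lemma blocks_ordered: "i < j \<Longrightarrow> j < nn (Suc k) \<Longrightarrow> set_less (Fs i - R) (Fs j - R)"
proof (induction j)
  case (Suc j)
  show ?case
  proof (cases "i = j")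
    case False
    then show ?thesis
      using Suc set_less_trans[OF _ block_below_next[of j] block_nonempty[of j]] by simp
  qed (use Suc block_below_next in simp)
qed simp

lemma root_below_block: "i < nn (Suc k) \<Longrightarrow> set_less R (Fs i - R)"
  using root_below_block_0 set_less_trans[OF root_below_block_0 blocks_ordered[of 0 i] block_nonempty[of 0]]
  by (cases "i = 0") auto

lemma below_in_block:
  assumes i: "i < nn (Suc k)" and a: "a \<in> Fs i - R"
  shows "{\<xi>\<in>F. \<xi> < a} = R \<union> (\<Union>j<i. Fs j - R) \<union> {\<xi>\<in>Fs i - R. \<xi> < a}"
proof (intro set_eqI iffI)
  fix x assume x: "x \<in> {\<xi>\<in>F. \<xi> < a}"
  then obtain j where j: "j < nn (Suc k)" "x \<in> Fs j" using Union_parts by auto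
  have "\<not> i < j \<or> x \<in> R"
  proof (rule ccontr)
    assume "\<not> (\<not> i < j \<or> x \<in> R)"
    then have "a < x" using blocks_ordered[of i j] j a unfolding set_less_def by blast
    then show False using x by (blast dest: less_asym)
  qed
  then show "x \<in> R \<union> (\<Union>j<i. Fs j - R) \<union> {\<xi>\<in>Fs i - R. \<xi> < a}"
    using j x by (cases "j = i") auto
next
  fix x assume "x \<in> R \<union> (\<Union>j<i. Fs j - R) \<union> {\<xi>\<in>Fs i - R. \<xi> < a}"
  moreover have "x < a" if "x \<in> R" using that root_below_block[OF i] a unfolding set_less_def by blast
  moreover have "x < a" if "j < i" "x \<in> Fs j - R" for j
    using that blocks_ordered[OF that(1) i] a unfolding set_less_def by blast
  ultimately show "x \<in> {\<xi>\<in>F. \<xi> < a}"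
    using i root_subset_part[OF i] Union_parts by auto
qed

lemma knorm_in_block:
  assumes i: "i < nn (Suc k)" and a: "a \<in> Fs i - R"
  shows "knorm m \<F> a (Suc k) = rr (Suc k) + i * (m k - rr (Suc k)) + card {\<xi>\<in>Fs i - R. \<xi> < a}"
    and "card {\<xi>\<in>Fs i - R. \<xi> < a} < m k - rr (Suc k)"
proof -
  have disj: "(Fs j - R) \<inter> (Fs j' - R) = {}" if "j < nn (Suc k)" "j' < nn (Suc k)" "j \<noteq> j'" for j j'
    using parts_Int[OF that] by blast
  have fin_U: "finite (\<Union>j<i. Fs j - R)" by (rule finite_UN_I) (use block_finite i in auto)
  have fin_L: "finite {\<xi>\<in>Fs i - R. \<xi> < a}" by (rule finite_subset[OF _ block_finite[OF i]]) auto
  have "card (\<Union>j<i. Fs j - R) = (\<Sum>j<i. card (Fs j - R))"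
    using block_finite disj i by (intro card_UN_disjoint) auto
  also have "\<dots> = i * (m k - rr (Suc k))" using block_card i by simp
  finally have card_U: "card (\<Union>j<i. Fs j - R) = i * (m k - rr (Suc k))" .
  have "(Fs j - R) \<inter> (Fs i - R) = {}" if "j < i" for j using disj[of j i] that i by simp
  then have disj_i: "(R \<union> (\<Union>j<i. Fs j - R)) \<inter> {\<xi>\<in>Fs i - R. \<xi> < a} = {}" by blast
  have "a \<in> F" using a i Union_parts by auto
  then have "knorm m \<F> a (Suc k) = card {\<xi>\<in>F. \<xi> < a}" by (rule knorm_eq_card_below[OF decomp_level])
  also have "\<dots> = card (R \<union> (\<Union>j<i. Fs j - R)) + card {\<xi>\<in>Fs i - R. \<xi> < a}"
    unfolding below_in_block[OF i a] using finite_root fin_U fin_L disj_i by (intro card_Un_disjoint) auto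
  also have "card (R \<union> (\<Union>j<i. Fs j - R)) = card R + card (\<Union>j<i. Fs j - R)"
    using finite_root fin_U by (intro card_Un_disjoint) auto
  finally show "knorm m \<F> a (Suc k) = rr (Suc k) + i * (m k - rr (Suc k)) + card {\<xi>\<in>Fs i - R. \<xi> < a}"
    using card_U card_root by simp
  have "{\<xi>\<in>Fs i - R. \<xi> < a} \<subset> Fs i - R" using a by auto
  then show "card {\<xi>\<in>Fs i - R. \<xi> < a} < m k - rr (Suc k)"
    using psubset_card_mono[OF block_finite[OF i]] block_card[OF i] by simp
qed

lemma knorm_in_root:
  assumes a: "a \<in> R"
  shows "knorm m \<F> a (Suc k) < rr (Suc k)"
proof -
  have "0 < nn (Suc k)" using nn_ge_2[of k] by simp
  then have "a \<in> F" using a root_subset_part Union_parts by blast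
  have "x \<in> R" if x: "x \<in> F" "x < a" for x
  proof (rule ccontr)
    assume "x \<notin> R"
    obtain j where "j < nn (Suc k)" "x \<in> Fs j" using x(1) Union_parts by auto
    then have "a < x" using root_below_block[of j] a \<open>x \<notin> R\<close> unfolding set_less_def by blast
    then show False using x(2) by (blast dest: less_asym)
  qed
  then have "card {\<xi>\<in>F. \<xi> < a} \<le> card (R - {a})"
    using finite_root by (intro card_mono) auto
  also have "\<dots> < card R" using finite_root a by (rule card_Diff1_less)
  finally have "card {\<xi>\<in>F. \<xi> < a} < card R" .
  then show ?thesis using knorm_eq_card_below[OF decomp_level \<open>a \<in> F\<close>] card_root by simp
qed

end

text \<open>The part of a level-\<open>k\<close> decomposition holding the element at position \<open>p\<close>:
  \<open>-1\<close> for the root, which fills the first \<open>r\<^sub>k\<close> positions, else the index of the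
  block, the blocks having \<open>m\<^sub>k\<^sub>-\<^sub>1 - r\<^sub>k\<close> elements each.\<close>

definition block_index :: "nat \<Rightarrow> nat \<Rightarrow> int" where
  "block_index k p = (if p < rr k then -1 else int ((p - rr k) div (m (k - 1) - rr k)))"

lemma block_index_in_block:
  assumes "decomp m nn rr \<F> (Suc k) F Fs R" "i < nn (Suc k)" "a \<in> Fs i - R"
  shows "block_index (Suc k) (knorm m \<F> a (Suc k)) = int i"
proof -
  let ?q = "card {\<xi>\<in>Fs i - R. \<xi> < a}"
  have "(i * (m k - rr (Suc k)) + ?q) div (m k - rr (Suc k)) = i"
    using knorm_in_block(2)[OF assms] by simp
  then show ?thesis unfolding block_index_def knorm_in_block(1)[OF assms] by simp
qed

lemma block_index_in_root:
  "decomp m nn rr \<F> (Suc k) F Fs R \<Longrightarrow> a \<in> R \<Longrightarrow> block_index (Suc k) (knorm m \<F> a (Suc k)) = -1"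
  using knorm_in_root unfolding block_index_def by simp

lemma Xi_Suc: "Xi m nn rr \<F> a (Suc k) = block_index (Suc k) (knorm m \<F> a (Suc k))"
proof -
  let ?P = "\<lambda>v. \<exists>F Fs R. decomp m nn rr \<F> (Suc k) F Fs R \<and> a \<in> F \<and>
      ((a \<in> R \<and> v = -1) \<or> (\<exists>i<nn (Suc k). a \<in> Fs i - R \<and> v = int i))"
  have unique: "v = block_index (Suc k) (knorm m \<F> a (Suc k))" if "?P v" for v
  proof -
    from that obtain F Fs R where d: "decomp m nn rr \<F> (Suc k) F Fs R"
      and "(a \<in> R \<and> v = -1) \<or> (\<exists>i<nn (Suc k). a \<in> Fs i - R \<and> v = int i)" by blast
    then show ?thesis using block_index_in_root[OF d] block_index_in_block[OF d] by auto
  qed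
  have exists: "?P (block_index (Suc k) (knorm m \<F> a (Suc k)))"
  proof -
    obtain F where F: "F \<in> level m \<F> (Suc k)" "a \<in> F" using exists_level_set by blast
    then obtain Fs R where d: "decomp m nn rr \<F> (Suc k) F Fs R" using decomp_exists by blast
    then have "a \<in> R \<or> (\<exists>i<nn (Suc k). a \<in> Fs i - R)" using F(2) Union_parts by blast
    then show ?thesis using d F(2) block_index_in_root[OF d] block_index_in_block[OF d] by blast
  qed
  have "(THE v. ?P v) = block_index (Suc k) (knorm m \<F> a (Suc k))"
    by (rule the_equality) (fact exists, erule unique)
  then show ?thesis unfolding Xi_def by simp
qed

lemma knorm_bounds_of_Xi_zero:
  assumes "Xi m nn rr \<F> a (Suc k) = 0"
  shows "rr (Suc k) \<le> knorm m \<F> a k" and "knorm m \<F> a k < m k"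
proof -
  obtain F where F: "F \<in> level m \<F> (Suc k)" "a \<in> F" using exists_level_set by blast
  then obtain Fs R where d: "decomp m nn rr \<F> (Suc k) F Fs R" using decomp_exists by blast
  have "a \<notin> R" using block_index_in_root[OF d] assms Xi_Suc by auto
  then obtain i where i: "i < nn (Suc k)" "a \<in> Fs i - R" using F(2) Union_parts[OF d] by auto
  then have "i = 0" using block_index_in_block[OF d i] assms Xi_Suc by simp
  have L: "Fs 0 \<in> level m \<F> k" using part_level[OF d] i \<open>i = 0\<close> by simp
  have a0: "a \<in> Fs 0" using i \<open>i = 0\<close> by simp
  have "R \<subseteq> {\<xi>\<in>Fs 0. \<xi> < a}"
    using root_subset_part[OF d] root_below_block[OF d] i \<open>i = 0\<close> unfolding set_less_def by auto
  then have "card R \<le> card {\<xi>\<in>Fs 0. \<xi> < a}" using in_levelD[OF L] by (intro card_mono) auto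
  moreover have "card {\<xi>\<in>Fs 0. \<xi> < a} < card (Fs 0)" using in_levelD[OF L] a0 by (intro psubset_card_mono) auto
  ultimately show "rr (Suc k) \<le> knorm m \<F> a k" "knorm m \<F> a k < m k"
    using knorm_eq_card_below[OF L a0] in_levelD[OF L] card_root[OF d] by simp_all
qed

section \<open>Comparing the functions \<open>o\<^sub>\<alpha>\<close>\<close>

lemma knorm_eq_below_Delta: "k < Delta m \<F> a b \<Longrightarrow> knorm m \<F> a k = knorm m \<F> b k"
  unfolding Delta_def by (rule not_less_Least[THEN notnotD])

lemma o_fun_eq_below_Delta:
  assumes "k < Delta m \<F> a b"
  shows "o_fun m nn rr \<F> C a k = o_fun m nn rr \<F> C b k"
proof (cases k)
  case 0
  then show ?thesis by (simp add: o_fun_def Xi_def)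
next
  case (Suc j)
  then have "knorm m \<F> a k = knorm m \<F> b k" "knorm m \<F> a j = knorm m \<F> b j"
    using knorm_eq_below_Delta[of k a b] knorm_eq_below_Delta[of j a b] assms by auto
  then show ?thesis using Suc by (simp add: o_fun_def Xi_Suc Let_def)
qed

lemma lex_less_o_fun_at_Delta:
  assumes \<Delta>: "Delta m \<F> \<alpha> \<beta> = Suc k" and \<alpha>: "Xi m nn rr \<F> \<alpha> (Suc k) = 0"
    and \<beta>: "Xi m nn rr \<F> \<beta> (Suc k) = int j" and "0 < j"
  shows "lex_less (o_fun m nn rr \<F> C \<alpha>) (o_fun m nn rr \<F> C \<beta>) \<longleftrightarrow> knorm m \<F> \<alpha> k \<in> C k j"
    and "lex_less (o_fun m nn rr \<F> C \<beta>) (o_fun m nn rr \<F> C \<alpha>) \<longleftrightarrow> knorm m \<F> \<alpha> k \<notin> C k j"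
proof -
  let ?o = "o_fun m nn rr \<F> C"
  have below: "\<forall>i<Suc k. ?o \<alpha> i = ?o \<beta> i" "\<forall>i<Suc k. ?o \<beta> i = ?o \<alpha> i"
    using o_fun_eq_below_Delta[of _ \<alpha> \<beta>] \<Delta> by auto
  have o\<alpha>: "?o \<alpha> (Suc k) = 0" using \<alpha> by (simp add: o_fun_def)
  have o\<beta>: "?o \<beta> (Suc k) = (if knorm m \<F> \<alpha> k \<in> C k j then int j else - int j)"
    using \<beta> \<open>0 < j\<close> knorm_eq_below_Delta[of k \<alpha> \<beta>] \<Delta> by (simp add: o_fun_def)
  have "?o \<alpha> (Suc k) \<noteq> ?o \<beta> (Suc k)" using o\<alpha> o\<beta> \<open>0 < j\<close> by simp
  note first_difference =
    lex_less_iff_first_difference[OF below(1) this] lex_less_iff_first_difference[OF below(2) this[symmetric]]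
  show "lex_less (?o \<alpha>) (?o \<beta>) \<longleftrightarrow> knorm m \<F> \<alpha> k \<in> C k j"
    and "lex_less (?o \<beta>) (?o \<alpha>) \<longleftrightarrow> knorm m \<F> \<alpha> k \<notin> C k j"
    using first_difference o\<alpha> o\<beta> \<open>0 < j\<close> by auto
qed

end

section \<open>Entanglement\<close>

lemma captured_disjoint:
  assumes "captured m nn rr \<F> l D N"
    and disj: "\<And>i j. i < N \<Longrightarrow> j < N \<Longrightarrow> i \<noteq> j \<Longrightarrow> D i \<inter> D j = {}"
  shows "j < N \<Longrightarrow> s < card (D j) \<Longrightarrow> Xi m nn rr \<F> (nth_el (D j) s) l = int j"
    and "i < N \<Longrightarrow> j < N \<Longrightarrow> i \<noteq> j \<Longrightarrow> s < card (D i) \<Longrightarrow>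
      Delta m \<F> (nth_el (D i) s) (nth_el (D j) s) = l"
proof -
  obtain R where "2 \<le> N" and R: "\<forall>i<N. \<forall>j<N. i \<noteq> j \<longrightarrow> D i \<inter> D j = R"
    and Xi: "\<forall>j<N. \<forall>a. card R \<le> a \<and> a < card (D j) \<longrightarrow> Xi m nn rr \<F> (nth_el (D j) a) l = int j"
    and Delta: "\<forall>i<N. \<forall>j<N. i \<noteq> j \<longrightarrow> (\<forall>a. card R \<le> a \<and> a < card (D i) \<longrightarrow>
      Delta m \<F> (nth_el (D i) a) (nth_el (D j) a) = l)"
    using assms(1) unfolding captured_def by (elim conjE exE) (rule that; assumption)
  have "R = {}" using R disj[of 0 1] \<open>2 \<le> N\<close> by auto
  then show "j < N \<Longrightarrow> s < card (D j) \<Longrightarrow> Xi m nn rr \<F> (nth_el (D j) s) l = int j"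
    and "i < N \<Longrightarrow> j < N \<Longrightarrow> i \<noteq> j \<Longrightarrow> s < card (D i) \<Longrightarrow>
      Delta m \<F> (nth_el (D i) s) (nth_el (D j) s) = l"
    using Xi Delta by auto
qed

locale capturing_scheme = scheme +
  fixes C :: "nat \<Rightarrow> nat \<Rightarrow> nat set" and n :: nat
  assumes fully_capturing: "fully_capturing m nn rr \<F>"
    and C_enum: "\<forall>k. {C k i | i. 0 < i \<and> i < nn (Suc k)} =
      {A. A \<subseteq> {rr (Suc k)..<m k} \<and> card A \<le> n}"
begin

abbreviation oF :: "'a \<Rightarrow> nat \<Rightarrow> int" where
  "oF \<equiv> o_fun m nn rr \<F> C"

lemma capture_above:
  assumes "\<forall>X\<in>S. finite X" and "uncountable S"
  obtains l D where "K < l" and "inj_on D {..<nn l}" and "\<forall>j<nn l. D j \<in> S"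
    and "captured m nn rr \<F> l D (nn l)"
proof -
  have "infinite {l. 0 < l \<and> (\<exists>D. inj_on D {..<nn l} \<and> (\<forall>j<nn l. D j \<in> S) \<and>
      captured m nn rr \<F> l D (nn l))}"
    using fully_capturing assms unfolding fully_capturing_def by blast
  then show ?thesis using that unfolding infinite_nat_iff_unbounded by blast
qed

text \<open>Pigeonholing first on a level containing each member puts \<open>D 0\<close> inside a single
  level-\<open>k\<close> set.\<close>

lemma capture_inside_level_set:
  assumes S: "uncountable S" "S \<subseteq> {X. finite X \<and> card X = N}" "pairwise disjnt S"
  obtains G k D where "G \<in> level m \<F> k" and "D 0 \<subseteq> G"
    and "\<And>j. j < nn (Suc k) \<Longrightarrow> D j \<in> S"
    and "\<And>j. 0 < j \<Longrightarrow> j < nn (Suc k) \<Longrightarrow> D j \<noteq> D 0"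
    and "\<And>j s. j < nn (Suc k) \<Longrightarrow> s < N \<Longrightarrow> Xi m nn rr \<F> (nth_el (D j) s) (Suc k) = int j"
    and "\<And>j s. 0 < j \<Longrightarrow> j < nn (Suc k) \<Longrightarrow> s < N \<Longrightarrow>
      Delta m \<F> (nth_el (D 0) s) (nth_el (D j) s) = Suc k"
proof -
  have "\<exists>K. \<exists>F\<in>level m \<F> K. X \<subseteq> F" if "X \<in> S" for X
  proof -
    have "finite X" using S(2) that by auto
    from exists_superset_at_level[OF this, of 0] show ?thesis by blast
  qed
  then obtain lev where lev: "\<And>X. X \<in> S \<Longrightarrow> \<exists>F\<in>level m \<F> (lev X). X \<subseteq> F" by metis
  obtain K where "uncountable {X\<in>S. lev X = K}"
    using uncountable_fiber[OF countable_subset[OF subset_UNIV countableI_type] S(1)] .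
  moreover have "\<forall>X\<in>{X\<in>S. lev X = K}. finite X" using S(2) by auto
  ultimately obtain l D where l: "K < l" "inj_on D {..<nn l}" "\<forall>j<nn l. D j \<in> {X\<in>S. lev X = K}"
    and capt: "captured m nn rr \<F> l D (nn l)"
    by (elim capture_above[rotated])
  obtain k where k: "l = Suc k" "K \<le> k" using l(1) by (cases l) auto
  have D: "D j \<in> S" "card (D j) = N" if "j < nn l" for j using l(3) S(2) that by auto
  have D_ne: "D i \<noteq> D j" if "i < nn l" "j < nn l" "i \<noteq> j" for i j
    using l(2) that unfolding inj_on_def by blast
  have disj: "D i \<inter> D j = {}" if "i < nn l" "j < nn l" "i \<noteq> j" for i j
    using S(3) D(1)[OF that(1)] D(1)[OF that(2)] D_ne[OF that]
    unfolding pairwise_def disjnt_def by blast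
  have "0 < nn l" using nn_ge_2[of k] k(1) by simp
  then have "D 0 \<in> S" "lev (D 0) = K" using l(3) by auto
  then obtain F where F: "F \<in> level m \<F> K" "D 0 \<subseteq> F" using lev by blast
  obtain G where "G \<in> level m \<F> k" "F \<subseteq> G" using level_set_extends[OF F(1) k(2)] .
  with F(2) have "G \<in> level m \<F> k" "D 0 \<subseteq> G" by auto
  then show ?thesis
  proof (rule that)
    show "D j \<in> S" if "j < nn (Suc k)" for j using D(1) that k(1) by simp
    show "D j \<noteq> D 0" if "0 < j" "j < nn (Suc k)" for j using D_ne[of j 0] that k(1) by simp
    show "Xi m nn rr \<F> (nth_el (D j) s) (Suc k) = int j" if "j < nn (Suc k)" "s < N" for j s
      using captured_disjoint(1)[OF capt disj, of j s] D(2) that k(1) by simp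
    show "Delta m \<F> (nth_el (D 0) s) (nth_el (D j) s) = Suc k"
      if "0 < j" "j < nn (Suc k)" "s < N" for j s
      using captured_disjoint(2)[OF capt disj, of 0 j s] D(2) that k(1) by simp
  qed
qed

lemma realize_small_pattern:
  assumes S: "uncountable S" "S \<subseteq> {X. finite X \<and> card X = N}" "pairwise disjnt S"
    and I: "I \<subseteq> {..<N}" "card I \<le> n"
  shows "\<exists>X\<in>S. \<exists>Y\<in>S. X \<noteq> Y \<and> (\<forall>s<N. lex_less (oF (nth_el X s)) (oF (nth_el Y s)) \<longleftrightarrow> s \<in> I)
    \<and> (\<forall>s<N. lex_less (oF (nth_el Y s)) (oF (nth_el X s)) \<longleftrightarrow> s \<notin> I)"
proof (rule capture_inside_level_set[OF S])
  fix G k D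
  assume G: "G \<in> level m \<F> k" "D 0 \<subseteq> G"
    and D: "\<And>j. j < nn (Suc k) \<Longrightarrow> D j \<in> S" "\<And>j. 0 < j \<Longrightarrow> j < nn (Suc k) \<Longrightarrow> D j \<noteq> D 0"
    and Xi: "\<And>j s. j < nn (Suc k) \<Longrightarrow> s < N \<Longrightarrow> Xi m nn rr \<F> (nth_el (D j) s) (Suc k) = int j"
    and Delta: "\<And>j s. 0 < j \<Longrightarrow> j < nn (Suc k) \<Longrightarrow> s < N \<Longrightarrow>
      Delta m \<F> (nth_el (D 0) s) (nth_el (D j) s) = Suc k"
  have "0 < nn (Suc k)" using nn_ge_2[of k] by simp
  then have D0: "finite (D 0)" "card (D 0) = N" "D 0 \<in> S" using D(1) S(2) by auto
  have Xi0: "Xi m nn rr \<F> (nth_el (D 0) s) (Suc k) = 0" if "s < N" for s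
    using Xi[OF \<open>0 < nn (Suc k)\<close> that] by simp
  define p where "p s = knorm m \<F> (nth_el (D 0) s) k" for s
  have "nth_el (D 0) ` {..<N} \<subseteq> G" using nth_el_in[OF D0(1)] D0(2) G(2) by auto
  then have "inj_on ((\<lambda>x. knorm m \<F> x k) \<circ> nth_el (D 0)) {..<N}"
    using inj_on_nth_el[OF D0(1)] D0(2) inj_on_subset[OF inj_on_knorm_level[OF G(1)]]
    by (intro comp_inj_on) auto
  then have p_inj: "inj_on p {..<N}" by (simp add: p_def[abs_def] comp_def)
  have "p s \<in> {rr (Suc k)..<m k}" if "s < N" for s
    using knorm_bounds_of_Xi_zero[OF Xi0[OF that]] by (simp add: p_def)
  then have "p ` I \<subseteq> {rr (Suc k)..<m k}" and "card (p ` I) \<le> n"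
    using I card_image_le[OF finite_subset[OF I(1)], of p] by auto
  then have "p ` I \<in> {C k i | i. 0 < i \<and> i < nn (Suc k)}" using C_enum by simp
  then obtain j where j: "0 < j" "j < nn (Suc k)" "C k j = p ` I" by blast
  have "lex_less (oF (nth_el (D 0) s)) (oF (nth_el (D j) s)) \<longleftrightarrow> s \<in> I"
    and "lex_less (oF (nth_el (D j) s)) (oF (nth_el (D 0) s)) \<longleftrightarrow> s \<notin> I" if "s < N" for s
  proof -
    have "p s \<in> C k j \<longleftrightarrow> s \<in> I" using inj_on_image_mem_iff[OF p_inj _ I(1)] that j(3) by simp
    then show "lex_less (oF (nth_el (D 0) s)) (oF (nth_el (D j) s)) \<longleftrightarrow> s \<in> I"
      and "lex_less (oF (nth_el (D j) s)) (oF (nth_el (D 0) s)) \<longleftrightarrow> s \<notin> I"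
      using lex_less_o_fun_at_Delta[OF Delta[OF j(1,2) that] Xi0[OF that] Xi[OF j(2) that] j(1), of C]
      by (simp_all add: p_def)
  qed
  then show ?thesis using D0(3) D(1)[OF j(2)] D(2)[OF j(1,2)] by blast
qed

lemma realize_pattern:
  assumes S: "uncountable S" "S \<subseteq> {X. finite X \<and> card X = 2 * n + 1}" "pairwise disjnt S"
    and I: "I \<subseteq> {..<2 * n + 1}"
  shows "\<exists>X\<in>S. \<exists>Y\<in>S. X \<noteq> Y \<and> (\<forall>s<2 * n + 1. lex_less (oF (nth_el X s)) (oF (nth_el Y s)) \<longleftrightarrow> s \<in> I)"
proof (cases "card I \<le> n")
  case True
  with realize_small_pattern[OF S I] show ?thesis by blast
next
  case False
  let ?J = "{..<2 * n + 1} - I"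
  have "card ?J = 2 * n + 1 - card I" using I by (simp add: card_Diff_subset finite_subset)
  with False have "card ?J \<le> n" by simp
  then obtain X Y where "X \<in> S" "Y \<in> S" "X \<noteq> Y"
    and "\<forall>s<2 * n + 1. lex_less (oF (nth_el Y s)) (oF (nth_el X s)) \<longleftrightarrow> s \<notin> ?J"
    using realize_small_pattern[OF S Diff_subset] by blast
  then show ?thesis by auto
qed

text \<open>Two singletons with the same value \<open>f\<close> of \<open>oF\<close> cannot realize the pattern \<open>I = {}\<close>.\<close>

lemma uncountable_range_o_fun: "uncountable (range oF)"
proof
  assume "countable (range oF)"
  obtain f where f: "uncountable {\<alpha>\<in>UNIV. oF \<alpha> = f}"
    using uncountable_fiber[OF \<open>countable (range oF)\<close> uncountable_UNIV] .
  define S where "S = (\<lambda>\<alpha>. {\<alpha>}) ` {\<alpha>. oF \<alpha> = f}"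
  have "uncountable S"
  proof
    assume "countable S"
    then have "countable {\<alpha>. oF \<alpha> = f}"
      unfolding S_def by (rule countable_image_inj_on) (simp add: inj_on_def)
    with f show False by simp
  qed
  moreover have "S \<subseteq> {X. finite X \<and> card X = 1}" "pairwise disjnt S"
    by (auto simp: S_def pairwise_def disjnt_def)
  ultimately have "\<exists>X\<in>S. \<exists>Y\<in>S. X \<noteq> Y \<and>
      (\<forall>s<1. lex_less (oF (nth_el X s)) (oF (nth_el Y s)) \<longleftrightarrow> s \<in> {}) \<and>
      (\<forall>s<1. lex_less (oF (nth_el Y s)) (oF (nth_el X s)) \<longleftrightarrow> s \<notin> {})"
    by (rule realize_small_pattern) auto
  then obtain X Y where "X \<in> S" "Y \<in> S" "lex_less (oF (nth_el Y 0)) (oF (nth_el X 0))" by blast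
  then show False using lex.irrefl by (auto simp: S_def)
qed

end

theorem mainTheorem7:
  fixes m nn rr :: "nat \<Rightarrow> nat"
    and \<F> :: "'a::wellorder set set"
    and C :: "nat \<Rightarrow> nat \<Rightarrow> nat set"
    and n :: nat
  assumes omega1_unc: "\<not> countable (UNIV :: 'a set)"
    and omega1_seg: "\<forall>x::'a. countable {y. y < x}"
    and scheme: "construction_scheme m nn rr \<F>"
    and capt: "fully_capturing m nn rr \<F>"
    and big: "\<forall>k. nn (Suc k) \<ge> 2 ^ m k"
    and C_enum: "\<forall>k. {C k i | i. 0 < i \<and> i < nn (Suc k)} =
                     {A. A \<subseteq> {rr (Suc k)..<m k} \<and> card A \<le> n}"
  shows "entangled lex_less (2 * n + 1) (range (o_fun m nn rr \<F> C))"
proof -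
  interpret capturing_scheme m nn rr \<F> C n
    by unfold_locales (fact scheme, fact omega1_unc, fact capt, fact C_enum)
  show ?thesis by (rule lex.entangled_rangeI[OF uncountable_range_o_fun realize_pattern])
qed

end
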